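(* In the algorithm PELEG described in the context, after each phase $m\ge 1$, \[ \max_{x,x'\in\mathcal X_m,\,x\ne x'}\|x-x'\|^2_{(V^m_{N_m})^{-1}}\le\frac{\left((1/2)^{m+1}\right)^2}{8\log(K^2/\delta_m)}. \]
   Context: Arms are a finite set $\mathcal{X}=\{x_1,\dots,x_K\}\subset\mathbb{R}^d$ with $\|x_k\|_2\le1$; rewards of arm $x$ are $\theta^{*T}x$ plus conditionally $1$-subgaussian noise, $\theta^*\in\mathbb R^d$ unknown. $\|x\|_A=\sqrt{x^TAx}$; $C=\lambda_{\min}(\sum_{k=1}^Kx_kx_k^T)$; $\mathcal P_K$ is the probability simplex on $[K]$; $B(0,D)$ the closed Euclidean ball of radius $D$; $\log$ is natural log. Algorithm PELEG (input $\mathcal X,\delta$). Set $m=1$, $\mathcal X_1=\mathcal X$. While $|\mathcal X_m|>1$ (phase $m$): 1. $\delta_m=\delta/m^2$, $r_m=\sqrt{8\log(K^2/\delta_m)}$, $D_m=2(\sqrt2-1)\sqrt{C/(\max_{x,x'\in\mathcal X_m,x\ne x'}\|x-x'\|_2^2\log K)}$, $\epsilon_m=\min\{1, D_m\sqrt C/r_m\}\,(1/2)^{m+1}$. 2. For $x\in\mathcal X_m$, $\mathcal C_m(x)=\{\lambda\in\mathbb R^d:\exists x'\in\mathcal X_m, x'\ne x,\ \lambda^Tx'\ge\lambda^Tx+\epsilon_m\}$; let $\Lambda_m=\bigcup_{x\in\mathcal X_m}\mathcal C_m(x)\cap B(0,D_m)$. 3. Burn-in: play each arm of $\mathcal X$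 once; set $n^k_K=1$ for all $k$, $V^m_K=\sum_{k=1}^Kx_kx_k^T$, $t=K$. Initialize afresh an exponential-weights (Hedge) learner over the $K$ experts $\hat e_1,\dots,\hat e_K$. 4. While $\min_{\lambda\in\Lambda_m}\|\lambda\|^2_{V^m_t}\le r_m^2$: set $t\leftarrow t+1$; get $w_t\in\mathcal P_K$ from the Hedge learner and form $W_t=\sum_kw_t^kx_kx_k^T$; let $\lambda_t\in\mathrm{argmin}_{\lambda\in\Lambda_m}\|\lambda\|^2_{W_t}$; set $U_t^k=(\lambda_t^Tx_k)^2$ and feed the Hedge learner the loss $l_t(w)=-w^TU_t$; play arm $k_t=\mathrm{argmin}_{k} n^k_{t-1}/\sum_{s=1}^t w_s^k$, increment its count, observe the reward $Y_t$, and set $V^m_t=V^m_{t-1}+x_{k_t}x_{k_t}^T$. 5. Set $N_m=t$ (so the phase stops at the first $t\ge K$ with $\min_{\lambda\in\Lambda_m}\|\lambda\|^2_{V^m_t}> r_m^2$), compute $\hat\theta_m=(V^m_{N_m})^{-1}\sum_{s=1}^{N_m}Y_sx_{k_s}$, set $\mathcal X_{m+1}=\mathcal X_m\setminus\{x\in\mathcal X_m:\exists x'\in\mathcal X_m,\ \hat\theta_m^T(x'-x)>2^{-(m+2)}\}$, and $m\leftarrow m+1$. Return $\mathcal X_m$. *)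

theory Defs
  imports "HOL-Analysis.Analysis"
begin

definition outer :: "real^'d \<Rightarrow> real^'d \<Rightarrow> real^'d^'d" where
  "outer u v = (\<chi> i j. u $ i * v $ j)"

definition wnorm2 :: "real^'d^'d \<Rightarrow> real^'d \<Rightarrow> real" where
  "wnorm2 A z = z \<bullet> (A *v z)"

definition lambda_min :: "real^'d^'d \<Rightarrow> real" where
  "lambda_min A = Min {\<mu>. \<exists>v. v \<noteq> 0 \<and> A *v v = \<mu> *\<^sub>R v}"

text \<open>Parameters of phase m of PELEG. Arms are x 0, ..., x (K-1).\<close>
definition gram :: "nat \<Rightarrow> (nat \<Rightarrow> real^'d) \<Rightarrow> real^'d^'d" where
  "gram K x = (\<Sum>k<K. outer (x k) (x k))"

definition Cconst :: "nat \<Rightarrow> (nat \<Rightarrow> real^'d) \<Rightarrow> real" where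
  "Cconst K x = lambda_min (gram K x)"

definition delta_m :: "real \<Rightarrow> nat \<Rightarrow> real" where
  "delta_m \<delta> m = \<delta> / (real m)^2"

definition r_m :: "nat \<Rightarrow> real \<Rightarrow> nat \<Rightarrow> real" where
  "r_m K \<delta> m = sqrt (8 * ln ((real K)^2 / delta_m \<delta> m))"

definition D_m :: "nat \<Rightarrow> (nat \<Rightarrow> real^'d) \<Rightarrow> (real^'d) set \<Rightarrow> real" where
  "D_m K x Xm = 2 * (sqrt 2 - 1) *
     sqrt (Cconst K x / (Max {(norm (y - y'))^2 | y y'. y \<in> Xm \<and> y' \<in> Xm \<and> y \<noteq> y'} * ln (real K)))"

definition eps_m :: "nat \<Rightarrow> (nat \<Rightarrow> real^'d) \<Rightarrow> (real^'d) set \<Rightarrow> real \<Rightarrow> nat \<Rightarrow> real" where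
  "eps_m K x Xm \<delta> m = min 1 (D_m K x Xm * sqrt (Cconst K x) / r_m K \<delta> m) * (1/2)^(m+1)"

definition Lambda_m :: "nat \<Rightarrow> (nat \<Rightarrow> real^'d) \<Rightarrow> (real^'d) set \<Rightarrow> real \<Rightarrow> nat \<Rightarrow> (real^'d) set" where
  "Lambda_m K x Xm \<delta> m = {l. l \<in> cball 0 (D_m K x Xm) \<and>
      (\<exists>y\<in>Xm. \<exists>y'\<in>Xm. y' \<noteq> y \<and> l \<bullet> y' \<ge> l \<bullet> y + eps_m K x Xm \<delta> m)}"

text \<open>Design matrix V^m_t of phase m: burn-in (each arm once) plus arms kk s
  played at rounds s = K+1, ..., t.\<close>
definition Vmat :: "nat \<Rightarrow> (nat \<Rightarrow> real^'d) \<Rightarrow> (nat \<Rightarrow> nat) \<Rightarrow> nat \<Rightarrow> real^'d^'d" where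
  "Vmat K x kk t = gram K x + (\<Sum>s\<in>{K<..t}. outer (x (kk s)) (x (kk s)))"

text \<open>Loop condition of step 4: min over Lambda_m of ||l||_V^2 <= r_m^2
  (the minimum is attained, Lambda_m being compact; empty minimum = +infinity).\<close>
definition continue_cond :: "nat \<Rightarrow> (nat \<Rightarrow> real^'d) \<Rightarrow> (real^'d) set \<Rightarrow> real \<Rightarrow> nat \<Rightarrow> real^'d^'d \<Rightarrow> bool" where
  "continue_cond K x Xm \<delta> m V = (\<exists>l\<in>Lambda_m K x Xm \<delta> m. wnorm2 V l \<le> (r_m K \<delta> m)^2)"

end

(*
  Let V be the design matrix at the stopping round, w = y - y', u = V^-1 w and
  q = ||w||^2_(V^-1) = ||u||^2_V.  The direction l = (eps_m / q) u separates y from y'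
  by exactly eps_m and has ||l||^2_V = eps_m^2 / q.  Since the phase has stopped, either
  l lies in Lambda_m, so eps_m^2 / q > r_m^2, or l leaves the ball B(0, D_m); as V
  dominates C times the identity, ||l||^2 <= eps_m^2 / (C q), so q < eps_m^2 / (C D_m^2).
  The factor min {1, D_m sqrt C / r_m} in eps_m makes both bounds at most
  ((1/2)^(m+1))^2 / r_m^2.  The bound V >= C I comes from the variational
  characterisation of the smallest eigenvalue of the (symmetric) Gram matrix.
*)
theory Submission
  imports Defs
begin

lemma selfadjoint_eigenvalues_finite:
  fixes f :: "'a::euclidean_space \<Rightarrow> 'a"
  assumes selfadjoint: "\<And>a b. a \<bullet> f b = f a \<bullet> b"
  shows "finite {\<mu>. \<exists>v. v \<noteq> 0 \<and> f v = \<mu> *\<^sub>R v}" (is "finite ?S")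
proof (rule ccontr)
  assume "infinite ?S"
  then obtain T where T: "T \<subseteq> ?S" "finite T" "card T = DIM('a) + 1"
    using infinite_arbitrarily_large by blast
  define e where "e \<mu> = (SOME v. v \<noteq> 0 \<and> f v = \<mu> *\<^sub>R v)" for \<mu>
  have e: "e \<mu> \<noteq> 0 \<and> f (e \<mu>) = \<mu> *\<^sub>R e \<mu>" if "\<mu> \<in> ?S" for \<mu>
    using someI_ex[OF that[simplified]] unfolding e_def by blast
  have orth: "e \<mu> \<bullet> e \<nu> = 0" if "\<mu> \<in> ?S" "\<nu> \<in> ?S" "\<mu> \<noteq> \<nu>" for \<mu> \<nu>
  proof -
    have "\<mu> * (e \<mu> \<bullet> e \<nu>) = f (e \<mu>) \<bullet> e \<nu>" using e[OF that(1)] by simp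
    also have "\<dots> = \<nu> * (e \<mu> \<bullet> e \<nu>)" using e[OF that(2)] by (simp flip: selfadjoint)
    finally show ?thesis using that(3) by simp
  qed
  have "inj_on e T"
  proof (rule inj_onI)
    fix \<mu> \<nu> assume "\<mu> \<in> T" "\<nu> \<in> T" and same: "e \<mu> = e \<nu>"
    then have eig: "\<mu> \<in> ?S" "\<nu> \<in> ?S" using T(1) by auto
    have "\<mu> *\<^sub>R e \<mu> = f (e \<nu>)" using e[OF eig(1)] same by simp
    also have "\<dots> = \<nu> *\<^sub>R e \<mu>" using e[OF eig(2)] same by simp
    finally show "\<mu> = \<nu>" using e[OF eig(1)] by simp
  qed
  moreover have "independent (e ` T)"
    using T(1) e orth
    by (intro pairwise_orthogonal_independent) (force simp: pairwise_def orthogonal_def)+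
  then have "card (e ` T) \<le> DIM('a)" using independent_bound by blast
  ultimately show False using T(3) by (simp add: card_image)
qed

lemma nonneg_form_zero_imp_zero:
  fixes f :: "'a::real_inner \<Rightarrow> 'a"
  assumes "linear f" and selfadjoint: "\<And>a b. a \<bullet> f b = f a \<bullet> b"
    and nonneg: "\<And>v. 0 \<le> v \<bullet> f v" and zero: "v \<bullet> f v = 0"
  shows "f v = 0"
proof (rule ccontr)
  assume "f v \<noteq> 0"
  define z where "z = f v"
  define c where "c = z \<bullet> f z"
  have z: "z \<bullet> z > 0" using \<open>f v \<noteq> 0\<close> by (simp add: z_def)
  have c: "c \<ge> 0" using nonneg by (simp add: c_def)
  have "0 \<le> (v - t *\<^sub>R z) \<bullet> f (v - t *\<^sub>R z)" for t
    by (rule nonneg)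
  also have "(v - t *\<^sub>R z) \<bullet> f (v - t *\<^sub>R z) = t\<^sup>2 * c - 2 * t * (z \<bullet> z)" for t
    using zero selfadjoint[of z v]
    by (simp add: linear_diff[OF \<open>linear f\<close>] linear_scale[OF \<open>linear f\<close>]
        inner_diff_left inner_diff_right c_def z_def power2_eq_square algebra_simps inner_commute)
  finally have "2 * t * (z \<bullet> z) \<le> t\<^sup>2 * c" for t by simp
  define t where "t = (z \<bullet> z) / (c + 1)"
  have t: "t > 0" using z c by (simp add: t_def)
  have "2 * (z \<bullet> z) \<le> t * c"
    using \<open>2 * t * (z \<bullet> z) \<le> t\<^sup>2 * c\<close> t by (simp add: power2_eq_square)
  also have "t * c < z \<bullet> z" using z c by (simp add: t_def field_simps)
  finally show False using z by simp
qed

lemma selfadjoint_min_eigenvalue: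
  fixes f :: "'a::euclidean_space \<Rightarrow> 'a"
  assumes "linear f" and selfadjoint: "\<And>a b. a \<bullet> f b = f a \<bullet> b"
  obtains v\<^sub>0 \<mu> where "v\<^sub>0 \<noteq> 0" "f v\<^sub>0 = \<mu> *\<^sub>R v\<^sub>0" "\<And>v. \<mu> * (norm v)\<^sup>2 \<le> v \<bullet> f v"
proof -
  have "bounded_linear f" using \<open>linear f\<close> linear_conv_bounded_linear by blast
  then have "continuous_on (sphere 0 1) (\<lambda>v. v \<bullet> f v)"
    by (intro continuous_intros linear_continuous_on)
  moreover have "sphere (0::'a) 1 \<noteq> {}" by simp
  ultimately obtain v\<^sub>0 where v\<^sub>0: "v\<^sub>0 \<in> sphere 0 1"
    and min: "\<And>u. u \<in> sphere 0 1 \<Longrightarrow> v\<^sub>0 \<bullet> f v\<^sub>0 \<le> u \<bullet> f u"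
    using continuous_attains_inf[OF compact_sphere] by blast
  define \<mu> where "\<mu> = v\<^sub>0 \<bullet> f v\<^sub>0"
  have bound: "\<mu> * (norm v)\<^sup>2 \<le> v \<bullet> f v" for v
  proof (cases "v = 0")
    case False
    define u where "u = v /\<^sub>R norm v"
    have "u \<in> sphere 0 1" using False by (simp add: u_def)
    then have "\<mu> * (norm v)\<^sup>2 \<le> (u \<bullet> f u) * (norm v)\<^sup>2"
      using min by (simp add: \<mu>_def mult_right_mono)
    also have "\<dots> = v \<bullet> f v"
      using False by (simp add: u_def linear_scale[OF \<open>linear f\<close>] power2_eq_square field_simps)
    finally show ?thesis .
  qed (simp add: linear_0[OF \<open>linear f\<close>])
  define g where "g v = f v - \<mu> *\<^sub>R v" for v
  have "linear g" unfolding g_def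
    using \<open>bounded_linear f\<close>
    by (intro bounded_linear.linear bounded_linear_sub bounded_linear_scaleR_right)
  moreover have "a \<bullet> g b = g a \<bullet> b" for a b
    by (simp add: g_def inner_diff_right inner_diff_left selfadjoint)
  moreover have "0 \<le> v \<bullet> g v" for v
    using bound[of v] by (simp add: g_def inner_diff_right dot_square_norm)
  moreover have "v\<^sub>0 \<bullet> g v\<^sub>0 = 0"
    using v\<^sub>0 by (simp add: g_def inner_diff_right dot_square_norm \<mu>_def)
  ultimately have "g v\<^sub>0 = 0" by (rule nonneg_form_zero_imp_zero)
  moreover have "v\<^sub>0 \<noteq> 0" using v\<^sub>0 by auto
  ultimately show ?thesis using that bound by (simp add: g_def)
qed

lemma symmetric_matrix_selfadjoint:
  fixes G :: "real^'n^'n"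
  assumes "transpose G = G"
  shows "a \<bullet> (G *v b) = (G *v a) \<bullet> b"
  by (metis assms dot_lmul_matrix transpose_matrix_vector)

lemma lambda_min_le_wnorm2:
  fixes G :: "real^'n^'n"
  assumes "transpose G = G"
  shows "lambda_min G * (norm v)\<^sup>2 \<le> wnorm2 G v"
proof -
  note selfadjoint = symmetric_matrix_selfadjoint[OF assms]
  obtain v\<^sub>0 \<mu> where "v\<^sub>0 \<noteq> 0" "G *v v\<^sub>0 = \<mu> *\<^sub>R v\<^sub>0"
    and bound: "\<And>v. \<mu> * (norm v)\<^sup>2 \<le> v \<bullet> (G *v v)"
    using selfadjoint_min_eigenvalue[OF matrix_vector_mul_linear selfadjoint] by metis
  then have "\<mu> \<in> {\<mu>. \<exists>v. v \<noteq> 0 \<and> G *v v = \<mu> *\<^sub>R v}" by blast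
  then have "lambda_min G \<le> \<mu>"
    unfolding lambda_min_def by (rule Min_le[OF selfadjoint_eigenvalues_finite[OF selfadjoint]])
  then have "lambda_min G * (norm v)\<^sup>2 \<le> \<mu> * (norm v)\<^sup>2" by (simp add: mult_right_mono)
  also have "\<dots> \<le> wnorm2 G v" using bound by (simp add: wnorm2_def)
  finally show ?thesis .
qed

lemma outer_mult_vector: "outer a b *v u = (b \<bullet> u) *\<^sub>R a"
  by (simp add: outer_def vec_eq_iff matrix_vector_mult_def inner_vec_def sum_distrib_left mult_ac)

lemma transpose_gram: "transpose (gram K x) = gram K x"
  by (simp add: gram_def outer_def transpose_def vec_eq_iff sum_component mult.commute)

lemma wnorm2_outer_self: "wnorm2 (outer a a) u = (a \<bullet> u)\<^sup>2"
  by (simp add: wnorm2_def outer_mult_vector power2_eq_square inner_commute)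

lemma wnorm2_add: "wnorm2 (A + B) u = wnorm2 A u + wnorm2 B u"
  by (simp add: wnorm2_def matrix_vector_mult_add_rdistrib inner_add_right)

lemma wnorm2_scaleR: "wnorm2 A (a *\<^sub>R u) = a\<^sup>2 * wnorm2 A u"
  by (simp add: wnorm2_def matrix_vector_mult_scaleR power2_eq_square)

lemma wnorm2_sum: "wnorm2 (\<Sum>s\<in>S. A s) u = (\<Sum>s\<in>S. wnorm2 (A s) u)"
  by (induction S rule: infinite_finite_induct) (simp_all add: wnorm2_add wnorm2_def[of 0])

lemma wnorm2_gram_le_Vmat: "wnorm2 (gram K x) u \<le> wnorm2 (Vmat K x kk t) u"
  by (simp add: Vmat_def wnorm2_add wnorm2_sum wnorm2_outer_self sum_nonneg)

lemma Cconst_le_wnorm2_Vmat: "Cconst K x * (norm u)\<^sup>2 \<le> wnorm2 (Vmat K x kk t) u"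
  using lambda_min_le_wnorm2[OF transpose_gram] wnorm2_gram_le_Vmat
  unfolding Cconst_def by (rule order_trans)

lemma matrix_inv_right:
  assumes "invertible A"
  shows "A ** matrix_inv A = mat 1"
  using someI_ex[OF assms[unfolded invertible_def]] unfolding matrix_inv_def by blast

lemma coercive_matrix_invertible:
  fixes V :: "real^'n^'n"
  assumes "c > 0" and coercive: "\<And>v. c * (norm v)\<^sup>2 \<le> wnorm2 V v"
  shows "invertible V"
proof -
  have "v = 0" if "V *v v = 0" for v
    using coercive[of v] that \<open>c > 0\<close> by (simp add: wnorm2_def mult_le_0_iff)
  then show ?thesis by (simp add: invertible_left_inverse matrix_left_invertible_ker)
qed

lemma wnorm2_matrix_inv_less_max:
  fixes V :: "real^'n^'n"
  assumes "c > 0" and coercive: "\<And>v. c * (norm v)\<^sup>2 \<le> wnorm2 V v"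
    and "w \<noteq> 0" "\<epsilon> > 0" "D > 0" "r > 0"
    and outside: "\<And>l. norm l \<le> D \<Longrightarrow> \<epsilon> \<le> l \<bullet> w \<Longrightarrow> r\<^sup>2 < wnorm2 V l"
  shows "wnorm2 (matrix_inv V) w < max (\<epsilon>\<^sup>2 / r\<^sup>2) (\<epsilon>\<^sup>2 / (c * D\<^sup>2))"
proof -
  define u where "u = matrix_inv V *v w"
  have Vu: "V *v u = w"
    using matrix_inv_right[OF coercive_matrix_invertible[OF \<open>c > 0\<close> coercive]]
    by (simp add: u_def matrix_vector_mul_assoc)
  define q where "q = wnorm2 V u"
  have q_eq: "wnorm2 (matrix_inv V) w = q"
    by (simp add: wnorm2_def q_def Vu flip: u_def) (simp add: inner_commute)
  have "u \<noteq> 0" using Vu \<open>w \<noteq> 0\<close> by auto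
  then have "c * (norm u)\<^sup>2 > 0" using \<open>c > 0\<close> by simp
  then have "q > 0" and u_le: "(norm u)\<^sup>2 \<le> q / c"
    using coercive[of u] \<open>c > 0\<close> by (simp_all add: q_def field_simps)
  define l where "l = (\<epsilon> / q) *\<^sub>R u"
  have "l \<bullet> w = \<epsilon>" using \<open>q > 0\<close>
    by (simp add: l_def q_def wnorm2_def flip: Vu)
  have "wnorm2 V l = \<epsilon>\<^sup>2 / q" using \<open>q > 0\<close>
    by (simp add: l_def wnorm2_scaleR power2_eq_square flip: q_def)
  show ?thesis
  proof (cases "norm l \<le> D")
    case True
    then have "r\<^sup>2 < \<epsilon>\<^sup>2 / q"
      using outside \<open>l \<bullet> w = \<epsilon>\<close> \<open>wnorm2 V l = \<epsilon>\<^sup>2 / q\<close> by force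
    then have "q < \<epsilon>\<^sup>2 / r\<^sup>2" using \<open>q > 0\<close> \<open>r > 0\<close> by (simp add: field_simps)
    then show ?thesis unfolding q_eq by linarith
  next
    case False
    then have "D\<^sup>2 < (norm l)\<^sup>2" using \<open>D > 0\<close> by (simp add: power_strict_mono)
    also have "\<dots> = (\<epsilon> / q)\<^sup>2 * (norm u)\<^sup>2"
      using \<open>\<epsilon> > 0\<close> \<open>q > 0\<close> by (simp add: l_def power_mult_distrib power_divide)
    also have "\<dots> \<le> (\<epsilon> / q)\<^sup>2 * (q / c)" using u_le by (rule mult_left_mono) simp
    also have "\<dots> = \<epsilon>\<^sup>2 / (c * q)" using \<open>q > 0\<close> by (simp add: power2_eq_square field_simps)
    finally have "q < \<epsilon>\<^sup>2 / (c * D\<^sup>2)"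
      using \<open>q > 0\<close> \<open>c > 0\<close> \<open>D > 0\<close> by (simp add: field_simps)
    then show ?thesis unfolding q_eq by linarith
  qed
qed

lemma ln_K2_div_delta_m_pos:
  assumes "K \<ge> 1" "0 < \<delta>" "\<delta> < 1" "m \<ge> 1"
  shows "0 < ln ((real K)\<^sup>2 / delta_m \<delta> m)"
proof -
  have "1 \<le> real K * real m" using assms by (simp add: mult_ge1_I)
  then have "1 \<le> (real K * real m)\<^sup>2" by (simp add: one_le_power)
  then have "\<delta> < (real K)\<^sup>2 * (real m)\<^sup>2" using \<open>\<delta> < 1\<close> by (simp add: power_mult_distrib)
  then show ?thesis using assms by (simp add: delta_m_def field_simps)
qed

lemma r_m_pos: "0 < ln ((real K)\<^sup>2 / delta_m \<delta> m) \<Longrightarrow> 0 < r_m K \<delta> m"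
  by (simp add: r_m_def)

lemma r_m_squared:
  "0 \<le> ln ((real K)\<^sup>2 / delta_m \<delta> m) \<Longrightarrow> (r_m K \<delta> m)\<^sup>2 = 8 * ln ((real K)\<^sup>2 / delta_m \<delta> m)"
  by (simp add: r_m_def)

lemma D_m_pos:
  assumes "Cconst K x > 0" "K \<ge> 2" "finite Xm" "y \<in> Xm" "y' \<in> Xm" "y \<noteq> y'"
  shows "D_m K x Xm > 0"
proof -
  let ?diam = "{(norm (a - b))\<^sup>2 | a b. a \<in> Xm \<and> b \<in> Xm \<and> a \<noteq> b}"
  have "?diam \<subseteq> (\<lambda>(a, b). (norm (a - b))\<^sup>2) ` (Xm \<times> Xm)" by auto
  then have "finite ?diam" using \<open>finite Xm\<close> finite_subset by blast
  then have "(norm (y - y'))\<^sup>2 \<le> Max ?diam" using assms(4-6) by (intro Max_ge) blast+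
  moreover have "(norm (y - y'))\<^sup>2 > 0" using \<open>y \<noteq> y'\<close> by simp
  ultimately have "Max ?diam > 0" by linarith
  moreover have "ln (real K) > 0" using \<open>K \<ge> 2\<close> by simp
  moreover have "sqrt 2 > 1" by simp
  ultimately show ?thesis using \<open>Cconst K x > 0\<close> by (simp add: D_m_def)
qed

lemma eps_m_pos:
  "D_m K x Xm > 0 \<Longrightarrow> Cconst K x > 0 \<Longrightarrow> r_m K \<delta> m > 0 \<Longrightarrow> eps_m K x Xm \<delta> m > 0"
  by (simp add: eps_m_def)

lemma eps_m_sq_le:
  assumes "D_m K x Xm > 0" "Cconst K x > 0" "r_m K \<delta> m > 0"
  shows "max ((eps_m K x Xm \<delta> m)\<^sup>2 / (r_m K \<delta> m)\<^sup>2)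
             ((eps_m K x Xm \<delta> m)\<^sup>2 / (Cconst K x * (D_m K x Xm)\<^sup>2))
           \<le> ((1/2)^(m+1))\<^sup>2 / (r_m K \<delta> m)\<^sup>2"
proof -
  define h :: real where "h = (1/2)^(m+1)"
  define D C r where "D = D_m K x Xm" and "C = Cconst K x" and "r = r_m K \<delta> m"
  define \<epsilon> where "\<epsilon> = eps_m K x Xm \<delta> m"
  have pos: "D > 0" "C > 0" "r > 0" "h > 0" using assms by (simp_all add: D_def C_def r_def h_def)
  have \<epsilon>: "\<epsilon> = min 1 (D * sqrt C / r) * h" by (simp add: \<epsilon>_def eps_m_def D_def C_def r_def h_def)
  have "0 \<le> \<epsilon>" and "\<epsilon> \<le> h" using pos by (simp_all add: \<epsilon> mult_right_le_one_le)
  have "\<epsilon> \<le> D * sqrt C / r * h" unfolding \<epsilon> using pos by (intro mult_right_mono) auto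
  then have "\<epsilon>\<^sup>2 \<le> h\<^sup>2" and "\<epsilon>\<^sup>2 \<le> (D * sqrt C / r * h)\<^sup>2"
    using \<open>0 \<le> \<epsilon>\<close> \<open>\<epsilon> \<le> h\<close> by (simp_all add: power_mono)
  moreover have "(D * sqrt C / r * h)\<^sup>2 / (C * D\<^sup>2) = h\<^sup>2 / r\<^sup>2"
    using pos by (simp add: power_mult_distrib power_divide field_simps)
  ultimately have "\<epsilon>\<^sup>2 / r\<^sup>2 \<le> h\<^sup>2 / r\<^sup>2" "\<epsilon>\<^sup>2 / (C * D\<^sup>2) \<le> h\<^sup>2 / r\<^sup>2"
    using pos by (auto intro: divide_right_mono order_trans[OF divide_right_mono])
  then show ?thesis by (simp add: \<epsilon>_def D_def C_def r_def h_def)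
qed

theorem lemma1:
  fixes x :: "nat \<Rightarrow> real^'d"
    and K :: nat and \<delta> :: real and m :: nat
    and Xm :: "(real^'d) set"
    and kk :: "nat \<Rightarrow> nat" and N :: nat
  assumes K2: "K \<ge> 2"
    and arms_inj: "inj_on x {..<K}"
    and arms_norm: "\<forall>k<K. norm (x k) \<le> 1"
    and C_pos: "Cconst K x > 0"
    and delta: "0 < \<delta>" "\<delta> < 1"
    and m1: "m \<ge> 1"
    and Xm_sub: "Xm \<subseteq> x ` {..<K}"
    and Xm_card: "card Xm > 1"
    and plays: "\<forall>s\<in>{K<..N}. kk s < K"
    and N_ge: "N \<ge> K"
    and before_stop: "\<forall>t. K \<le> t \<and> t < N \<longrightarrow> continue_cond K x Xm \<delta> m (Vmat K x kk t)"
    and stop: "\<not> continue_cond K x Xm \<delta> m (Vmat K x kk N)"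
  shows "\<forall>y\<in>Xm. \<forall>y'\<in>Xm. y \<noteq> y' \<longrightarrow>
           wnorm2 (matrix_inv (Vmat K x kk N)) (y - y')
             \<le> ((1/2)^(m+1))^2 / (8 * ln ((real K)^2 / delta_m \<delta> m))"
proof (intro ballI impI)
  fix y y' assume y: "y \<in> Xm" and y': "y' \<in> Xm" and "y \<noteq> y'"
  have ln_pos: "0 < ln ((real K)\<^sup>2 / delta_m \<delta> m)"
    using K2 delta m1 by (intro ln_K2_div_delta_m_pos) auto
  have r_pos: "r_m K \<delta> m > 0" using ln_pos by (rule r_m_pos)
  have D_pos: "D_m K x Xm > 0"
    using C_pos K2 finite_subset[OF Xm_sub] y y' \<open>y \<noteq> y'\<close> by (intro D_m_pos) auto
  have "wnorm2 (matrix_inv (Vmat K x kk N)) (y - y')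
      < max ((eps_m K x Xm \<delta> m)\<^sup>2 / (r_m K \<delta> m)\<^sup>2)
            ((eps_m K x Xm \<delta> m)\<^sup>2 / (Cconst K x * (D_m K x Xm)\<^sup>2))"
  proof (rule wnorm2_matrix_inv_less_max[OF C_pos Cconst_le_wnorm2_Vmat])
    fix l assume "norm l \<le> D_m K x Xm" and "eps_m K x Xm \<delta> m \<le> l \<bullet> (y - y')"
    then have "l \<bullet> y' + eps_m K x Xm \<delta> m \<le> l \<bullet> y" by (simp add: inner_diff_right)
    then have "l \<in> Lambda_m K x Xm \<delta> m"
      using \<open>norm l \<le> D_m K x Xm\<close> y y' \<open>y \<noteq> y'\<close> unfolding Lambda_m_def by auto
    then show "(r_m K \<delta> m)\<^sup>2 < wnorm2 (Vmat K x kk N) l"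
      using stop unfolding continue_cond_def by force
  qed (use \<open>y \<noteq> y'\<close> D_pos C_pos r_pos eps_m_pos in auto)
  also have "\<dots> \<le> ((1/2)^(m+1))\<^sup>2 / (r_m K \<delta> m)\<^sup>2"
    using D_pos C_pos r_pos by (rule eps_m_sq_le)
  also have "\<dots> = ((1/2)^(m+1))^2 / (8 * ln ((real K)^2 / delta_m \<delta> m))"
    using ln_pos by (simp add: r_m_squared)
  finally show "wnorm2 (matrix_inv (Vmat K x kk N)) (y - y')
      \<le> ((1/2)^(m+1))^2 / (8 * ln ((real K)^2 / delta_m \<delta> m))" by simp
qed

end
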